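(* Let $c=\Big(8\sum_{j=1}^\infty\log^2(1+1/j)\Big)^{1/2}$. For every positive integer $t$ and all positive integers $a_1,\dots,a_t$, \[ \sum_{i=1}^t\log(a_i+1)\le\frac{c}{2}\Bigg(\sum_{i=1}^t i\,a_i\Bigg)^{1/2}. \] Moreover the constant $c/2$ is best possible: for every $c'<c/2$ there exist $t\ge1$ and positive integers $a_1,\dots,a_t$ with $\sum_{i=1}^t\log(a_i+1)>c'\big(\sum_{i=1}^t i a_i\big)^{1/2}$. *)

theory Defs
  imports Complex_Main
begin

definition c_const :: real where
  "c_const = sqrt (8 * (\<Sum>j. (ln (1 + 1 / real (Suc j)))\<^sup>2))"

end

theory Submission
  imports Defs "HOL-Analysis.Convex" "HOL-Analysis.Summation_Tests"
begin

(* Write lstep j = ln (1 + 1/(j+1)); then ln (a + 1) = \<Sum>_{j<a} lstep j by telescoping, and the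
   constant is c/2 = sqrt (2 \<Sigma>) with \<Sigma> = \<Sum>_j (lstep j)^2.  Read a_1, ..., a_t as the rows of a
   diagram with column heights N_j = #{i \<le> t. j < a_i}.  Exchanging rows and columns gives
     \<Sum>_i ln (a_i + 1) = \<Sum>_j lstep j * N_j   and   \<Sum>_i i a_i = \<Sum>_j \<Sum>{i \<le> t. j < a_i} i.
   Upper bound: N distinct positive integers sum to at least N (N + 1) / 2, hence
   \<Sum>_j N_j^2 \<le> 2 \<Sum>_i i a_i, and Cauchy-Schwarz finishes the proof.
   Sharpness: prescribe the columns N_j = floor (K lstep j) for j < J and take the conjugate rows
   a_i = #{j < J. i \<le> N_j}.  With A, B the partial sums of (lstep j)^2 and lstep j below J, the
   left side is at least K A - B while 2 \<Sum>_i i a_i \<le> K^2 A + K B.  Choosing J with 2 A > c'^2 and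
   then K large beats any c' < c/2.
   The file develops the weights, the row/column exchange, the upper bound, the conjugate
   construction with its floor estimates, the lower bound, and finally the theorem. *)

definition lstep :: "nat \<Rightarrow> real" where
  "lstep j = ln (1 + 1 / real (Suc j))"

lemma lstep_pos: "lstep j > 0"
  unfolding lstep_def by (intro ln_gt_zero) simp

(* Monotonicity makes floor (K * lstep j) a non-increasing column profile. *)
lemma lstep_antimono: "i \<le> j \<Longrightarrow> lstep j \<le> lstep i"
  unfolding lstep_def by (subst ln_le_cancel_iff) (auto simp: frac_le add_pos_pos)

lemma lstep_telescope: "lstep j = ln (real (Suc j) + 1) - ln (real j + 1)"
proof -
  have "1 + 1 / real (Suc j) = (real (Suc j) + 1) / (real j + 1)"
    by (simp add: field_simps)
  then show ?thesis unfolding lstep_def by (simp add: ln_div)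
qed

lemma ln_eq_sum_lstep: "ln (real a + 1) = (\<Sum>j<a. lstep j)"
  using sum_lessThan_telescope[of "\<lambda>j. ln (real j + 1)" a] by (simp add: lstep_telescope)

lemma lstep_le: "lstep j \<le> 1 / real (Suc j)"
  unfolding lstep_def by (rule ln_add_one_self_le_self) simp

lemma summable_lstep_sq: "summable (\<lambda>j. (lstep j)\<^sup>2)"
proof (rule summable_comparison_test)
  show "summable (\<lambda>j. inverse ((real (Suc j))\<^sup>2))"
    using inverse_power_summable[of 2] by (subst summable_Suc_iff) simp
  have "(lstep j)\<^sup>2 \<le> inverse ((real (Suc j))\<^sup>2)" for j
    using power_mono[OF lstep_le, of j 2] lstep_pos[of j]
    by (simp add: power_divide inverse_eq_divide)
  then show "\<exists>N. \<forall>j\<ge>N. norm ((lstep j)\<^sup>2) \<le> inverse ((real (Suc j))\<^sup>2)"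
    by simp
qed

definition lstep_sq_sum :: real where
  "lstep_sq_sum = (\<Sum>j. (lstep j)\<^sup>2)"

lemma c_const_half: "c_const / 2 = sqrt (2 * lstep_sq_sum)"
proof -
  have "c_const = sqrt (2\<^sup>2 * (2 * lstep_sq_sum))"
    unfolding c_const_def lstep_sq_sum_def lstep_def by simp
  then show ?thesis by (simp only: real_sqrt_mult real_sqrt_abs)
qed

lemma partial_sum_le_lstep_sq_sum: "(\<Sum>j<M. (lstep j)\<^sup>2) \<le> lstep_sq_sum"
  unfolding lstep_sq_sum_def by (rule sum_le_suminf[OF summable_lstep_sq]) auto

lemma lstep_sq_sum_pos: "lstep_sq_sum > 0"
proof -
  have "0 < (lstep 0)\<^sup>2" using lstep_pos[of 0] by simp
  also have "\<dots> = (\<Sum>j<1. (lstep j)\<^sup>2)" by simp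
  also have "\<dots> \<le> lstep_sq_sum" by (rule partial_sum_le_lstep_sq_sum)
  finally show ?thesis .
qed

(* Height of column j of the diagram with rows a_1, ..., a_t. *)
definition layer :: "(nat \<Rightarrow> nat) \<Rightarrow> nat \<Rightarrow> nat \<Rightarrow> nat" where
  "layer a t j = card {i \<in> {1..t}. j < a i}"

(* Double counting over the cells (i, j) of the diagram, j < a_i. *)
lemma sum_rows_eq_sum_columns:
  fixes a :: "nat \<Rightarrow> nat" and g :: "nat \<Rightarrow> nat \<Rightarrow> 'b::comm_monoid_add"
  assumes "\<forall>i\<in>{1..t}. a i \<le> M"
  shows "(\<Sum>i=1..t. \<Sum>j<a i. g i j) = (\<Sum>j<M. \<Sum>i\<in>{i \<in> {1..t}. j < a i}. g i j)"
proof -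
  have "{j \<in> {..<M}. j < a i} = {..<a i}" if "i \<in> {1..t}" for i
    using assms that by fastforce
  then have "(\<Sum>i=1..t. \<Sum>j<a i. g i j) = (\<Sum>i=1..t. \<Sum>j\<in>{j \<in> {..<M}. j < a i}. g i j)"
    by (intro sum.cong) simp_all
  also have "\<dots> = (\<Sum>j<M. \<Sum>i\<in>{i \<in> {1..t}. j < a i}. g i j)"
    by (rule sum.swap_restrict) auto
  finally show ?thesis .
qed

lemma ln_sum_eq_layers:
  assumes "\<forall>i\<in>{1..t}. a i \<le> M"
  shows "(\<Sum>i=1..t. ln (real (a i) + 1)) = (\<Sum>j<M. lstep j * real (layer a t j))"
  using sum_rows_eq_sum_columns[OF assms, of "\<lambda>_ j. lstep j"]
  by (simp add: ln_eq_sum_lstep layer_def mult.commute)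

lemma weighted_sum_eq_layers:
  assumes "\<forall>i\<in>{1..t}. a i \<le> M"
  shows "(\<Sum>i=1..t. real i * real (a i)) = (\<Sum>j<M. \<Sum>i\<in>{i \<in> {1..t}. j < a i}. real i)"
  using sum_rows_eq_sum_columns[OF assms, of "\<lambda>i _. real i"] by (simp add: mult.commute)

(* A set of N positive integers has sum at least 1 + ... + N: remove its maximum, which is \<ge> N. *)
lemma card_mult_Suc_le_twice_sum:
  fixes C :: "nat set"
  assumes "finite C" "0 \<notin> C"
  shows "card C * (card C + 1) \<le> 2 * \<Sum>C"
  using assms
proof (induction "card C" arbitrary: C)
  case 0
  then show ?case by simp
next
  case (Suc n)
  define m where "m = Max C"
  have "C \<noteq> {}" using Suc.hyps(2) by auto
  then have m_in: "m \<in> C" unfolding m_def using Suc.prems(1) by simp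
  have "C \<subseteq> {1..m}"
    unfolding m_def using Suc.prems by (auto simp: Suc_le_eq intro: gr0I)
  then have card_le: "card C \<le> m" using card_mono[of "{1..m}" C] by simp
  have "card (C - {m}) = n" using Suc.hyps(2) m_in by simp
  then have IH: "n * (n + 1) \<le> 2 * \<Sum>(C - {m})"
    using Suc.hyps(1)[of "C - {m}"] Suc.prems by simp
  have "\<Sum>C = m + \<Sum>(C - {m})" using Suc.prems(1) m_in by (simp add: sum.remove)
  then show ?case using IH card_le Suc.hyps(2)[symmetric] by simp
qed

lemma layer_sq_le_weighted_sum:
  assumes "\<forall>i\<in>{1..t}. a i \<le> M"
  shows "(\<Sum>j<M. (real (layer a t j))\<^sup>2) \<le> 2 * (\<Sum>i=1..t. real i * real (a i))"
proof -
  have "(real (layer a t j))\<^sup>2 \<le> 2 * (\<Sum>i\<in>{i \<in> {1..t}. j < a i}. real i)" for j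
  proof -
    have "layer a t j * (layer a t j + 1) \<le> 2 * \<Sum>{i \<in> {1..t}. j < a i}"
      unfolding layer_def by (rule card_mult_Suc_le_twice_sum) auto
    then have "real (layer a t j * (layer a t j + 1)) \<le> real (2 * \<Sum>{i \<in> {1..t}. j < a i})"
      by (rule of_nat_mono)
    then show ?thesis by (simp add: power2_eq_square algebra_simps)
  qed
  then have "(\<Sum>j<M. (real (layer a t j))\<^sup>2) \<le> (\<Sum>j<M. 2 * (\<Sum>i\<in>{i \<in> {1..t}. j < a i}. real i))"
    by (rule sum_mono)
  also have "\<dots> = 2 * (\<Sum>i=1..t. real i * real (a i))"
    unfolding weighted_sum_eq_layers[OF assms] by (rule sum_distrib_left[symmetric])
  finally show ?thesis .
qed

(* First half of the theorem, by Cauchy-Schwarz over the columns (t = 0 and a_i = 0 are allowed). *)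
lemma upper_bound:
  "(\<Sum>i=1..t. ln (real (a i) + 1)) \<le> c_const / 2 * sqrt (\<Sum>i=1..t. real i * real (a i))"
proof -
  define M where "M = Max (a ` {1..t})"
  have bounded: "\<forall>i\<in>{1..t}. a i \<le> M" unfolding M_def by auto
  define L where "L = (\<Sum>i=1..t. ln (real (a i) + 1))"
  define T where "T = (\<Sum>i=1..t. real i * real (a i))"
  have "L\<^sup>2 = (\<Sum>j<M. lstep j * real (layer a t j))\<^sup>2"
    unfolding L_def ln_sum_eq_layers[OF bounded] ..
  also have "\<dots> \<le> (\<Sum>j<M. (lstep j)\<^sup>2) * (\<Sum>j<M. (real (layer a t j))\<^sup>2)"
    by (rule Cauchy_Schwarz_ineq_sum)
  also have "\<dots> \<le> lstep_sq_sum * (2 * T)"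
    unfolding T_def using lstep_sq_sum_pos
    by (intro mult_mono partial_sum_le_lstep_sq_sum layer_sq_le_weighted_sum[OF bounded]) (auto intro: sum_nonneg)
  finally have "L \<le> sqrt (lstep_sq_sum * (2 * T))" by (rule real_le_rsqrt)
  also have "\<dots> = sqrt (2 * lstep_sq_sum) * sqrt T" by (simp add: real_sqrt_mult[symmetric] algebra_simps)
  finally have "L \<le> sqrt (2 * lstep_sq_sum) * sqrt T" .
  then show ?thesis unfolding L_def T_def c_const_half .
qed

(* Rows of the diagram whose columns j < J have heights n j (the conjugate partition). *)
definition conjugate :: "(nat \<Rightarrow> nat) \<Rightarrow> nat \<Rightarrow> nat \<Rightarrow> nat" where
  "conjugate n J i = card {j \<in> {..<J}. i \<le> n j}"

lemma down_closed_eq_lessThan: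
  fixes D :: "nat set"
  assumes "finite D" "\<And>x y. x \<in> D \<Longrightarrow> y \<le> x \<Longrightarrow> y \<in> D"
  shows "D = {..<card D}"
proof -
  have "D \<subseteq> {..<card D}"
  proof
    fix x assume "x \<in> D"
    then have "{..x} \<subseteq> D" using assms(2) by auto
    then have "card {..x} \<le> card D" using assms(1) by (rule card_mono[rotated])
    then show "x \<in> {..<card D}" by simp
  qed
  then show ?thesis by (intro card_subset_eq) auto
qed

lemma less_conjugate_iff:
  assumes "antimono n"
  shows "j < conjugate n J i \<longleftrightarrow> j < J \<and> i \<le> n j"
proof -
  let ?D = "{j \<in> {..<J}. i \<le> n j}"
  have "?D = {..<card ?D}"
  proof (rule down_closed_eq_lessThan)
    fix x y assume "x \<in> ?D" "y \<le> x"
    then show "y \<in> ?D" using antimonoD[OF assms, of y x] by auto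
  qed simp
  then have "j < conjugate n J i \<longleftrightarrow> j \<in> ?D"
    unfolding conjugate_def by (metis lessThan_iff)
  then show ?thesis by simp
qed

lemma conjugate_le: "conjugate n J i \<le> J"
  unfolding conjugate_def using card_mono[of "{..<J}" "{j \<in> {..<J}. i \<le> n j}"] by auto

lemma layer_conjugate:
  assumes "antimono n" "j < J"
  shows "layer (conjugate n J) (n 0) j = n j"
proof -
  have "n j \<le> n 0" using antimonoD[OF assms(1)] by simp
  then have "{i \<in> {1..n 0}. j < conjugate n J i} = {1..n j}"
    using assms by (auto simp: less_conjugate_iff)
  then show ?thesis unfolding layer_def by simp
qed

lemma conjugate_sums:
  assumes "antimono n"
  shows "(\<Sum>i=1..n 0. ln (real (conjugate n J i) + 1)) = (\<Sum>j<J. lstep j * real (n j))"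
    and "2 * (\<Sum>i=1..n 0. real i * real (conjugate n J i)) = (\<Sum>j<J. real (n j) * (real (n j) + 1))"
proof -
  have bounded: "\<forall>i\<in>{1..n 0}. conjugate n J i \<le> J" by (simp add: conjugate_le)
  show "(\<Sum>i=1..n 0. ln (real (conjugate n J i) + 1)) = (\<Sum>j<J. lstep j * real (n j))"
    unfolding ln_sum_eq_layers[OF bounded] using assms by (simp add: layer_conjugate)
  have "{i \<in> {1..n 0}. j < conjugate n J i} = {1..n j}" if "j < J" for j
    using assms that antimonoD[OF assms, of 0 j] by (auto simp: less_conjugate_iff)
  then have "2 * (\<Sum>i=1..n 0. real i * real (conjugate n J i)) = (\<Sum>j<J. 2 * (\<Sum>i=1..n j. real i))"
    unfolding weighted_sum_eq_layers[OF bounded] sum_distrib_left by simp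
  also have "\<dots> = (\<Sum>j<J. real (n j) * (real (n j) + 1))"
    using double_gauss_sum_from_Suc_0[where 'a = real] by simp
  finally show "2 * (\<Sum>i=1..n 0. real i * real (conjugate n J i)) = (\<Sum>j<J. real (n j) * (real (n j) + 1))" .
qed

lemma floor_staircase_bounds:
  fixes x :: "nat \<Rightarrow> real" and K :: real
  assumes "K \<ge> 0" "\<And>j. x j \<ge> 0"
  shows "K * (\<Sum>j<J. (x j)\<^sup>2) - (\<Sum>j<J. x j) \<le> (\<Sum>j<J. x j * real (nat \<lfloor>K * x j\<rfloor>))"
    and "(\<Sum>j<J. real (nat \<lfloor>K * x j\<rfloor>) * (real (nat \<lfloor>K * x j\<rfloor>) + 1))
           \<le> K\<^sup>2 * (\<Sum>j<J. (x j)\<^sup>2) + K * (\<Sum>j<J. x j)"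
proof -
  have Kx: "K * x j \<ge> 0" for j using assms by simp
  have upper: "real (nat \<lfloor>K * x j\<rfloor>) \<le> K * x j" for j using Kx[of j] by linarith
  have lower: "K * x j - 1 \<le> real (nat \<lfloor>K * x j\<rfloor>)" for j using Kx[of j] by linarith
  have "K * (\<Sum>j<J. (x j)\<^sup>2) - (\<Sum>j<J. x j) = (\<Sum>j<J. x j * (K * x j - 1))"
    by (simp add: sum_distrib_left sum_subtractf power2_eq_square algebra_simps)
  also have "\<dots> \<le> (\<Sum>j<J. x j * real (nat \<lfloor>K * x j\<rfloor>))"
    using assms(2) by (intro sum_mono mult_left_mono lower)
  finally show "K * (\<Sum>j<J. (x j)\<^sup>2) - (\<Sum>j<J. x j) \<le> (\<Sum>j<J. x j * real (nat \<lfloor>K * x j\<rfloor>))" .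
  have "(\<Sum>j<J. real (nat \<lfloor>K * x j\<rfloor>) * (real (nat \<lfloor>K * x j\<rfloor>) + 1))
        \<le> (\<Sum>j<J. (K * x j) * (K * x j + 1))"
    using Kx by (intro sum_mono mult_mono add_right_mono upper) auto
  also have "\<dots> = K\<^sup>2 * (\<Sum>j<J. (x j)\<^sup>2) + K * (\<Sum>j<J. x j)"
    by (simp add: sum_distrib_left sum.distrib power2_eq_square algebra_simps)
  finally show "(\<Sum>j<J. real (nat \<lfloor>K * x j\<rfloor>) * (real (nat \<lfloor>K * x j\<rfloor>) + 1))
           \<le> K\<^sup>2 * (\<Sum>j<J. (x j)\<^sup>2) + K * (\<Sum>j<J. x j)" .
qed

lemma eventually_quadratic_pos:
  fixes p q r :: real
  assumes "p > 0" "r \<ge> 0"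
  shows "\<forall>\<^sub>F x in at_top. 0 < p * x\<^sup>2 - q * x + r"
  using eventually_gt_at_top[of "max 0 (q / p)"]
proof eventually_elim
  case (elim x)
  then have "q < p * x" using assms(1) by (simp add: field_simps)
  then have "0 < x * (p * x - q)" using elim by simp
  then show ?case using assms(2) by (simp add: power2_eq_square algebra_simps)
qed

(* Once 2 A > c^2, every sufficiently large scale K satisfies the three requirements of the
   construction: the quadratic estimate, a first column of height \<ge> 1, and K A \<ge> B. *)
lemma large_scale_exists:
  fixes A B c w :: real
  assumes "c\<^sup>2 / 2 < A" "0 < w"
  shows "\<exists>K. c\<^sup>2 * (K\<^sup>2 * A + K * B) / 2 < (K * A - B)\<^sup>2 \<and> 1 \<le> K * w \<and> B \<le> K * A"
proof -
  have "0 \<le> c\<^sup>2 / 2" by simp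
  then have A_pos: "0 < A" using assms(1) by linarith
  have "0 < A\<^sup>2 - c\<^sup>2 * A / 2" using assms(1) A_pos by (simp add: power2_eq_square)
  then have "\<forall>\<^sub>F K in at_top. 0 < (A\<^sup>2 - c\<^sup>2 * A / 2) * K\<^sup>2 - (2 * A * B + c\<^sup>2 * B / 2) * K + B\<^sup>2"
    by (rule eventually_quadratic_pos) simp
  then have "\<forall>\<^sub>F K in at_top. c\<^sup>2 * (K\<^sup>2 * A + K * B) / 2 < (K * A - B)\<^sup>2"
    by eventually_elim (simp add: power2_eq_square algebra_simps add_divide_distrib)
  moreover have "\<forall>\<^sub>F K in at_top. 1 \<le> K * w"
    using eventually_ge_at_top[of "1 / w"]
    by eventually_elim (use assms(2) in \<open>simp add: field_simps\<close>)
  moreover have "\<forall>\<^sub>F K in at_top. B \<le> K * A"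
    using eventually_ge_at_top[of "B / A"]
    by eventually_elim (use A_pos in \<open>simp add: field_simps\<close>)
  ultimately have "\<forall>\<^sub>F K in at_top. c\<^sup>2 * (K\<^sup>2 * A + K * B) / 2 < (K * A - B)\<^sup>2 \<and>
                     1 \<le> K * w \<and> B \<le> K * A"
    by eventually_elim (intro conjI)
  then show ?thesis by (rule eventually_happens'[rotated]) simp
qed

lemma staircase_witness:
  fixes K :: real
  assumes n_def: "\<And>j. n j = nat \<lfloor>K * lstep j\<rfloor>"
  assumes "0 < J" "1 \<le> K * lstep 0"
  shows "1 \<le> n 0"
    and "\<forall>i\<in>{1..n 0}. 1 \<le> conjugate n J i"
    and "K * (\<Sum>j<J. (lstep j)\<^sup>2) - (\<Sum>j<J. lstep j)
           \<le> (\<Sum>i=1..n 0. ln (real (conjugate n J i) + 1))"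
    and "2 * (\<Sum>i=1..n 0. real i * real (conjugate n J i))
           \<le> K\<^sup>2 * (\<Sum>j<J. (lstep j)\<^sup>2) + K * (\<Sum>j<J. lstep j)"
proof -
  have "0 < K * lstep 0" using assms(3) by linarith
  then have K_pos: "K > 0" using lstep_pos[of 0] by (rule zero_less_mult_pos2)
  have lstep_nonneg: "\<And>j. 0 \<le> lstep j" using lstep_pos less_imp_le by blast
  have mono: "antimono n"
    unfolding n_def[abs_def] using K_pos
    by (intro antimonoI nat_mono floor_mono mult_left_mono lstep_antimono) auto
  show "1 \<le> n 0" unfolding n_def using assms(3) by linarith
  show "\<forall>i\<in>{1..n 0}. 1 \<le> conjugate n J i"
    using assms(2) less_conjugate_iff[OF mono, of 0 J] by (auto simp: Suc_le_eq)
  show "K * (\<Sum>j<J. (lstep j)\<^sup>2) - (\<Sum>j<J. lstep j)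
          \<le> (\<Sum>i=1..n 0. ln (real (conjugate n J i) + 1))"
    unfolding conjugate_sums(1)[OF mono] unfolding n_def
    using K_pos lstep_nonneg by (intro floor_staircase_bounds(1)) auto
  show "2 * (\<Sum>i=1..n 0. real i * real (conjugate n J i))
          \<le> K\<^sup>2 * (\<Sum>j<J. (lstep j)\<^sup>2) + K * (\<Sum>j<J. lstep j)"
    unfolding conjugate_sums(2)[OF mono] unfolding n_def
    using K_pos lstep_nonneg by (intro floor_staircase_bounds(2)) auto
qed

(* Second half of the theorem for 0 \<le> c: truncate the series at J so that 2 A > c^2, then take K large. *)
lemma lower_bound:
  fixes c :: real
  assumes "0 \<le> c" "c < c_const / 2"
  shows "\<exists>(t::nat) (a::nat \<Rightarrow> nat). t \<ge> 1 \<and> (\<forall>i\<in>{1..t}. a i \<ge> 1) \<and>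
           c * sqrt (\<Sum>i=1..t. real i * real (a i)) < (\<Sum>i=1..t. ln (real (a i) + 1))"
proof -
  have "c\<^sup>2 < (sqrt (2 * lstep_sq_sum))\<^sup>2"
    using assms c_const_half by (intro power_strict_mono) auto
  then have small: "c\<^sup>2 / 2 < lstep_sq_sum" using lstep_sq_sum_pos by simp
  have lim: "(\<lambda>m. \<Sum>j<m. (lstep j)\<^sup>2) \<longlonglongrightarrow> lstep_sq_sum"
    unfolding lstep_sq_sum_def by (rule summable_LIMSEQ[OF summable_lstep_sq])
  have "\<exists>J. c\<^sup>2 / 2 < (\<Sum>j<J. (lstep j)\<^sup>2)"
    by (rule eventually_happens'[OF sequentially_bot order_tendstoD(1)[OF lim small]])
  then obtain J where A_big: "c\<^sup>2 / 2 < (\<Sum>j<J. (lstep j)\<^sup>2)" ..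
  define A where "A = (\<Sum>j<J. (lstep j)\<^sup>2)"
  define B where "B = (\<Sum>j<J. lstep j)"
  have "J > 0" using A_big by (cases J) auto
  obtain K where K_quad: "c\<^sup>2 * (K\<^sup>2 * A + K * B) / 2 < (K * A - B)\<^sup>2"
    and K_first: "1 \<le> K * lstep 0" and K_A: "B \<le> K * A"
    using large_scale_exists[OF A_big[folded A_def] lstep_pos[of 0], of B] by blast
  define n where "n j = nat \<lfloor>K * lstep j\<rfloor>" for j
  define t where "t = n 0"
  define a where "a = conjugate n J"
  define L where "L = (\<Sum>i=1..t. ln (real (a i) + 1))"
  define T where "T = (\<Sum>i=1..t. real i * real (a i))"
  note witness = staircase_witness[OF n_def \<open>J > 0\<close> K_first]
  have "K * A - B \<le> L" unfolding L_def A_def B_def t_def a_def by (rule witness(3))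
  have "T \<ge> 0" unfolding T_def by (intro sum_nonneg) auto
  then have "(c * sqrt T)\<^sup>2 = c\<^sup>2 * T" by (simp add: power_mult_distrib)
  also have "\<dots> \<le> c\<^sup>2 * (K\<^sup>2 * A + K * B) / 2"
    using mult_left_mono[OF witness(4), of "c\<^sup>2"] unfolding T_def A_def B_def t_def a_def by simp
  also have "\<dots> < (K * A - B)\<^sup>2" by (rule K_quad)
  also have "\<dots> \<le> L\<^sup>2"
    using power_mono[OF \<open>K * A - B \<le> L\<close>, of 2] K_A by simp
  finally have "(c * sqrt T)\<^sup>2 < L\<^sup>2" .
  moreover have "0 \<le> L" using K_A \<open>K * A - B \<le> L\<close> by linarith
  ultimately have "c * sqrt T < L" by (rule power_less_imp_less_base)
  show ?thesis
  proof (intro exI conjI)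
    show "1 \<le> t" unfolding t_def by (rule witness(1))
    show "\<forall>i\<in>{1..t}. 1 \<le> a i" unfolding t_def a_def by (rule witness(2))
    show "c * sqrt (\<Sum>i=1..t. real i * real (a i)) < (\<Sum>i=1..t. ln (real (a i) + 1))"
      using \<open>c * sqrt T < L\<close> unfolding L_def T_def .
  qed
qed

theorem lemma3p3:
  shows "(\<forall>(t::nat) (a::nat \<Rightarrow> nat). t \<ge> 1 \<longrightarrow> (\<forall>i\<in>{1..t}. a i \<ge> 1) \<longrightarrow>
            (\<Sum>i=1..t. ln (real (a i) + 1)) \<le> c_const / 2 * sqrt (\<Sum>i=1..t. real i * real (a i)))
       \<and> (\<forall>c'::real. c' < c_const / 2 \<longrightarrow>
            (\<exists>(t::nat) (a::nat \<Rightarrow> nat). t \<ge> 1 \<and> (\<forall>i\<in>{1..t}. a i \<ge> 1) \<and>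
               (\<Sum>i=1..t. ln (real (a i) + 1)) > c' * sqrt (\<Sum>i=1..t. real i * real (a i))))"
proof (intro conjI allI impI)
  fix t :: nat and a :: "nat \<Rightarrow> nat"
  show "(\<Sum>i=1..t. ln (real (a i) + 1)) \<le> c_const / 2 * sqrt (\<Sum>i=1..t. real i * real (a i))"
    by (rule upper_bound)
next
  fix c' :: real
  assume "c' < c_const / 2"
  moreover have "0 < c_const / 2" unfolding c_const_half using lstep_sq_sum_pos by simp
  ultimately have "0 \<le> max c' 0" "max c' 0 < c_const / 2" by auto
  from lower_bound[OF this] obtain t a where "t \<ge> 1" "\<forall>i\<in>{1..t}. a i \<ge> 1"
    and beaten: "max c' 0 * sqrt (\<Sum>i=1..t. real i * real (a i)) < (\<Sum>i=1..t. ln (real (a i) + 1))"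
    by blast
  have "c' * sqrt (\<Sum>i=1..t. real i * real (a i)) \<le> max c' 0 * sqrt (\<Sum>i=1..t. real i * real (a i))"
    by (intro mult_right_mono) (auto intro: sum_nonneg)
  with beaten have "c' * sqrt (\<Sum>i=1..t. real i * real (a i)) < (\<Sum>i=1..t. ln (real (a i) + 1))"
    by linarith
  then show "\<exists>t a. t \<ge> 1 \<and> (\<forall>i\<in>{1..t}. a i \<ge> 1) \<and>
          (\<Sum>i=1..t. ln (real (a i) + 1)) > c' * sqrt (\<Sum>i=1..t. real i * real (a i))"
    using \<open>t \<ge> 1\<close> \<open>\<forall>i\<in>{1..t}. a i \<ge> 1\<close> by auto
qed

end
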